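(* For every nonempty $A\subseteq\mathbb R$ with $|A|<\mathfrak c$ we have $\mathfrak{ss}_e=\mathfrak{ss}_l^A=\mathfrak c$, and for every nonempty finite $B\subseteq\mathbb R$ we have $\mathfrak{ss}_e^\perp=(\mathfrak{ss}_l^{B})^\perp=2$.
   Context: $\mathfrak c=2^{\aleph_0}$. Let $\mathfrak S_{cc}$ be the set of all sequences $\mathbf a=\langle a_i:i\in\omega\rangle$ of rational numbers with $a_i\to0$ such that $\sum_i a_i$ is conditionally convergent (converges to a real number, with the positive terms summing to $+\infty$ and the negative terms to $-\infty$). Let $[\omega]^\omega_\omega$ be the set of infinite coinfinite subsets of $\omega$; for such $X$ with increasing enumeration $\langle i_n\rangle$, $\sum_X\mathbf a$ denotes $\sum_n a_{i_n}$. For $A\subseteq\mathbb R$: $\mathfrak{ss}_l^A$ is the least cardinality of $\mathcal X\subseteq[\omega]^\omega_\omega$ such that every $\mathbf a\in\mathfrak S_{cc}$ has some $X\in\mathcal X$ for which $\sum_X\mathbf a$ converges to a limit in $A$; $(\mathfrak{ss}_l^A)^\perp$ is the least cardinality of $\mathcal A\subseteq\mathfrak S_{cc}$ such that no $X\in[\omega]^\omega_\omega$ has $\sum_X\mathbf a$ converging to a limit in $A$ for all $\mathbf a\in\mathcal A$. $\mathfrak{ss}_e$ is the least cardinality of $\mathcal X\subseteq[\omega]^\omega_\omega$ such that every $\mathbf a\in\mathfrak S_{cc}$ has some $X\in\mathcal X$ for which $\sum_X\mathbf a$ converges to the same limit as $\sum\mathbf a$; $\mathfrak{ss}_e^\perp$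 is the least cardinality of $\mathcal A\subseteq\mathfrak S_{cc}$ such that no $X\in[\omega]^\omega_\omega$ has $\sum_X\mathbf a=\sum\mathbf a$ for all $\mathbf a\in\mathcal A$. *)

theory Defs
  imports "HOL-Analysis.Analysis" "HOL-Library.Infinite_Set" "HOL-Library.Equipollence"
begin

definition S_cc :: "(nat \<Rightarrow> rat) set" where
  "S_cc = {a. (\<lambda>i. real_of_rat (a i)) \<longlonglongrightarrow> 0
              \<and> summable (\<lambda>i. real_of_rat (a i))
              \<and> filterlim (\<lambda>n. \<Sum>i<n. max 0 (real_of_rat (a i))) at_top sequentially
              \<and> filterlim (\<lambda>n. \<Sum>i<n. min 0 (real_of_rat (a i))) at_bot sequentially}"

definition infcoinf :: "nat set set" where
  "infcoinf = {X. infinite X \<and> infinite (UNIV - X)}"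

definition subsums :: "(nat \<Rightarrow> rat) \<Rightarrow> nat set \<Rightarrow> real \<Rightarrow> bool" where
  "subsums a X L \<longleftrightarrow> (\<lambda>n. real_of_rat (a (enumerate X n))) sums L"

definition good_l :: "real set \<Rightarrow> nat set set \<Rightarrow> bool" where
  "good_l A \<X> \<longleftrightarrow> \<X> \<subseteq> infcoinf \<and> (\<forall>a\<in>S_cc. \<exists>X\<in>\<X>. \<exists>L\<in>A. subsums a X L)"

definition good_e :: "nat set set \<Rightarrow> bool" where
  "good_e \<X> \<longleftrightarrow> \<X> \<subseteq> infcoinf \<and>
     (\<forall>a\<in>S_cc. \<exists>X\<in>\<X>. subsums a X (\<Sum>i. real_of_rat (a i)))"

definition good_l_perp :: "real set \<Rightarrow> (nat \<Rightarrow> rat) set \<Rightarrow> bool" where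
  "good_l_perp A \<A> \<longleftrightarrow> \<A> \<subseteq> S_cc \<and>
     \<not> (\<exists>X\<in>infcoinf. \<forall>a\<in>\<A>. \<exists>L\<in>A. subsums a X L)"

definition good_e_perp :: "(nat \<Rightarrow> rat) set \<Rightarrow> bool" where
  "good_e_perp \<A> \<longleftrightarrow> \<A> \<subseteq> S_cc \<and>
     \<not> (\<exists>X\<in>infcoinf. \<forall>a\<in>\<A>. subsums a X (\<Sum>i. real_of_rat (a i)))"

definition least_card_is_c :: "('a set \<Rightarrow> bool) \<Rightarrow> bool" where
  "least_card_is_c P \<longleftrightarrow> (\<exists>F. P F \<and> F \<approx> (UNIV :: real set))
                        \<and> (\<forall>F. P F \<longrightarrow> (UNIV :: real set) \<lesssim> F)"

definition least_card_is_2 :: "('a set \<Rightarrow> bool) \<Rightarrow> bool" where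
  "least_card_is_2 P \<longleftrightarrow> (\<exists>F. P F \<and> finite F \<and> card F = 2)
                        \<and> (\<forall>F. P F \<longrightarrow> infinite F \<or> 2 \<le> card F)"

end

theory Submission
  imports Defs
begin

(* Every conditionally convergent series has, for every real L, an infinite coinfinite
   subseries summing to L: fix an infinite set Z of indices on which the series converges
   absolutely and run the greedy (Riemann) selection outside Z. So the continuum many
   infinite coinfinite sets witness both upper bounds, and one series never suffices for
   the orthogonal numbers.

   For the lower bounds perturb the alternating harmonic series by c_x(i) = 3^-g_i(x),
   where g_i(x) = floor (2^i sigma(x)) lies in the dyadic block [2^i, 2^(i+1)) for an
   injection sigma : R -> (1,2). The sum of c_x over an infinite set Y is a ternary
   expansion, so it determines {g_i(x) | i in Y} and hence x. Thus one X serves at most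
   one x for ss_e, and one pair (X, L) at most one x for ss_l^A.

   For the orthogonal numbers, the alternating harmonic series and its perturbation by
   d 2^-(i+1) have, on any infinite coinfinite X, subsums differing by a number strictly
   between 0 and d, whereas their sums differ by exactly d; choosing d below the gaps of
   B finishes the proof. *)

definition masked :: "nat set \<Rightarrow> (nat \<Rightarrow> real) \<Rightarrow> nat \<Rightarrow> real" where
  "masked X f i = (if i \<in> X then f i else 0)"

lemma subsums_iff_masked:
  assumes "infinite X"
  shows "subsums a X L \<longleftrightarrow> masked X (\<lambda>i. real_of_rat (a i)) sums L"
proof -
  have "(\<lambda>n. masked X (\<lambda>i. real_of_rat (a i)) (enumerate X n)) sums L
          \<longleftrightarrow> masked X (\<lambda>i. real_of_rat (a i)) sums L"
    by (rule sums_mono_reindex)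
      (auto simp: strict_mono_enumerate[OF assms] range_enumerate[OF assms] masked_def)
  then show ?thesis
    unfolding subsums_def by (simp add: masked_def enumerate_in_set[OF assms])
qed

lemma masked_add: "masked X (\<lambda>i. f i + g i) = (\<lambda>i. masked X f i + masked X g i)"
  by (auto simp: masked_def)

lemma masked_UNIV [simp]: "masked UNIV f = f"
  by (auto simp: masked_def)

lemma masked_Compl_sums:
  assumes "f sums S" "masked X f sums L"
  shows "masked (UNIV - X) f sums (S - L)"
proof -
  have "(\<lambda>i. f i - masked X f i) = masked (UNIV - X) f"
    by (auto simp: masked_def)
  then show ?thesis using sums_diff[OF assms] by simp
qed

lemma summable_masked:
  assumes "summable (\<lambda>i. \<bar>f i\<bar>)"
  shows "summable (masked X f)"
  by (rule summable_comparison_test[OF _ assms]) (auto simp: masked_def)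

lemma sums_add_iff:
  fixes f g :: "nat \<Rightarrow> real"
  assumes "g sums c"
  shows "(\<lambda>i. f i + g i) sums L \<longleftrightarrow> f sums (L - c)"
  using sums_diff[OF _ assms, of "\<lambda>i. f i + g i" L] sums_add[OF _ assms, of f "L - c"] by auto

lemma nonneg_not_summable_imp_at_top:
  fixes f :: "nat \<Rightarrow> real"
  assumes nonneg: "\<And>i. 0 \<le> f i" and "\<not> summable f"
  shows "filterlim (\<lambda>n. \<Sum>i<n. f i) at_top sequentially"
  unfolding filterlim_at_top
proof
  fix z
  obtain N where N: "z \<le> (\<Sum>i<N. f i)"
    using summableI_nonneg_bounded[OF nonneg, where x = z] assms(2) by (meson linorder_le_cases)
  have "(\<Sum>i<N. f i) \<le> (\<Sum>i<n. f i)" if "N \<le> n" for n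
    using that nonneg by (intro sum_mono2) auto
  then show "eventually (\<lambda>n. z \<le> (\<Sum>i<n. f i)) sequentially"
    unfolding eventually_sequentially using N by (meson order_trans)
qed

lemma summable_not_abs_summable_iff_parts_diverge:
  fixes r :: "nat \<Rightarrow> real"
  assumes "summable r"
  shows "\<not> summable (\<lambda>i. \<bar>r i\<bar>) \<longleftrightarrow>
           filterlim (\<lambda>n. \<Sum>i<n. max 0 (r i)) at_top sequentially \<and>
           filterlim (\<lambda>n. \<Sum>i<n. min 0 (r i)) at_bot sequentially"
proof
  assume not_abs: "\<not> summable (\<lambda>i. \<bar>r i\<bar>)"
  define S A where "S n = (\<Sum>i<n. r i)" and "A n = (\<Sum>i<n. \<bar>r i\<bar>)" for n
  have S: "(\<lambda>n. S n / 2) \<longlonglongrightarrow> suminf r / 2"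
    unfolding S_def by (intro tendsto_divide tendsto_const summable_LIMSEQ assms) simp
  have A_top: "filterlim A at_top sequentially"
    unfolding A_def by (rule nonneg_not_summable_imp_at_top[OF _ not_abs]) simp
  have A: "filterlim (\<lambda>n. A n / 2) at_top sequentially"
    using filterlim_tendsto_pos_mult_at_top[OF tendsto_const[of "1/2"] _ A_top] by simp
  have "(\<Sum>i<n. max 0 (r i)) = S n / 2 + A n / 2"
       "(\<Sum>i<n. min 0 (r i)) = S n / 2 + - (A n / 2)" for n
    unfolding S_def A_def sum_divide_distrib sum_negf[symmetric] sum.distrib[symmetric]
    by (auto intro!: sum.cong simp: max_def min_def)
  moreover have "filterlim (\<lambda>n. S n / 2 + A n / 2) at_top sequentially"
    by (rule filterlim_tendsto_add_at_top[OF S A])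
  moreover have "filterlim (\<lambda>n. S n / 2 + - (A n / 2)) at_bot sequentially"
    unfolding filterlim_tendsto_add_at_bot_iff[OF S] using A by (simp add: filterlim_uminus_at_top)
  ultimately show "filterlim (\<lambda>n. \<Sum>i<n. max 0 (r i)) at_top sequentially \<and>
           filterlim (\<lambda>n. \<Sum>i<n. min 0 (r i)) at_bot sequentially"
    by simp
next
  assume "filterlim (\<lambda>n. \<Sum>i<n. max 0 (r i)) at_top sequentially \<and>
          filterlim (\<lambda>n. \<Sum>i<n. min 0 (r i)) at_bot sequentially"
  then have big: "eventually (\<lambda>n. suminf (\<lambda>i. \<bar>r i\<bar>) + 1 \<le> (\<Sum>i<n. max 0 (r i))) sequentially"
    unfolding filterlim_at_top by blast
  show "\<not> summable (\<lambda>i. \<bar>r i\<bar>)"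
  proof
    assume abs: "summable (\<lambda>i. \<bar>r i\<bar>)"
    have bound: "(\<Sum>i<n. max 0 (r i)) \<le> suminf (\<lambda>i. \<bar>r i\<bar>)" for n
      using sum_mono[of "{..<n}" "\<lambda>i. max 0 (r i)" "\<lambda>i. \<bar>r i\<bar>"] sum_le_suminf[OF abs, of "{..<n}"]
      by fastforce
    have "eventually (\<lambda>n. False) sequentially"
      using big by (rule eventually_mono) (use bound in \<open>fastforce dest: order_trans\<close>)
    then show False by simp
  qed
qed

lemma S_cc_iff:
  "a \<in> S_cc \<longleftrightarrow>
     summable (\<lambda>i. real_of_rat (a i)) \<and> \<not> summable (\<lambda>i. \<bar>real_of_rat (a i)\<bar>)"
  unfolding S_cc_def
  using summable_LIMSEQ_zero summable_not_abs_summable_iff_parts_diverge by blast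

lemma S_cc_add_abs_summable:
  assumes "a \<in> S_cc" and "summable (\<lambda>i. \<bar>real_of_rat (c i)\<bar>)"
  shows "(\<lambda>i. a i + c i) \<in> S_cc"
proof -
  define ra rc where "ra = (\<lambda>i. real_of_rat (a i))" and "rc = (\<lambda>i. real_of_rat (c i))"
  have a: "summable ra" "\<not> summable (\<lambda>i. \<bar>ra i\<bar>)"
    using assms(1) unfolding S_cc_iff ra_def by auto
  have c: "summable (\<lambda>i. \<bar>rc i\<bar>)"
    using assms(2) unfolding rc_def .
  have "\<not> summable (\<lambda>i. \<bar>ra i + rc i\<bar>)"
  proof
    assume "summable (\<lambda>i. \<bar>ra i + rc i\<bar>)"
    then have sum: "summable (\<lambda>i. \<bar>ra i + rc i\<bar> + \<bar>rc i\<bar>)"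
      using c by (rule summable_add)
    have bound: "norm \<bar>ra i\<bar> \<le> \<bar>ra i + rc i\<bar> + \<bar>rc i\<bar>" for i
      unfolding real_norm_def abs_abs by linarith
    have "summable (\<lambda>i. \<bar>ra i\<bar>)"
      by (rule summable_comparison_test[OF _ sum]) (use bound in blast)
    then show False using a(2) by contradiction
  qed
  moreover have "summable (\<lambda>i. ra i + rc i)"
    using a(1) summable_rabs_cancel[OF c] by (rule summable_add)
  ultimately show ?thesis unfolding S_cc_iff ra_def rc_def of_rat_add by blast
qed

definition alt_harmonic :: "nat \<Rightarrow> rat" where
  "alt_harmonic i = (-1) ^ i / of_nat (Suc i)"

lemma real_of_alt_harmonic: "real_of_rat (alt_harmonic i) = (-1) ^ i / real (Suc i)"
  by (simp add: alt_harmonic_def of_rat_divide of_rat_power of_rat_add)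

lemma alt_harmonic_in_S_cc: "alt_harmonic \<in> S_cc"
proof -
  have "\<not> summable (\<lambda>i. inverse (real (Suc i)))"
    using not_summable_harmonic summable_Suc_iff[of "\<lambda>n. inverse (real n)"] by simp
  then show ?thesis
    unfolding S_cc_iff real_of_alt_harmonic
    using sums_summable[OF alternating_harmonic_series_sums]
    by (simp add: abs_mult power_abs divide_inverse)
qed

lemma summable_alt_harmonic: "summable (\<lambda>i. real_of_rat (alt_harmonic i))"
  using alt_harmonic_in_S_cc by (simp add: S_cc_iff)

lemma exists_sparse_abs_summable_set:
  fixes r :: "nat \<Rightarrow> real"
  assumes "r \<longlonglongrightarrow> 0"
  shows "\<exists>Z. infinite Z \<and> summable (masked Z (\<lambda>i. \<bar>r i\<bar>))"
proof -
  have "\<forall>k. \<exists>N. \<forall>n\<ge>N. \<bar>r n\<bar> < (1/2) ^ k"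
    using assms unfolding LIMSEQ_iff by simp
  then obtain N where N: "\<And>k n. N k \<le> n \<Longrightarrow> \<bar>r n\<bar> < (1/2) ^ k"
    by metis
  define z where "z k = k + (\<Sum>j\<le>k. N j)" for k
  have z: "strict_mono z"
    by (rule strict_monoI_Suc) (simp add: z_def)
  have Nz: "N k \<le> z k" for k
    unfolding z_def using member_le_sum[of k "{..k}" N] by simp
  then have "norm \<bar>r (z k)\<bar> \<le> (1/2) ^ k" for k
    using N[OF Nz[of k]] by simp
  then have "summable (\<lambda>k. \<bar>r (z k)\<bar>)"
    using summable_comparison_test[of "\<lambda>k. \<bar>r (z k)\<bar>" "\<lambda>k. (1/2::real) ^ k"] by simp
  then have "summable (masked (range z) (\<lambda>i. \<bar>r i\<bar>))"
    using summable_mono_reindex[OF z, of "masked (range z) (\<lambda>i. \<bar>r i\<bar>)"]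
    by (simp add: masked_def)
  moreover have "infinite (range z)"
    using strict_mono_imp_inj_on[OF z] by (rule range_inj_infinite)
  ultimately show ?thesis by blast
qed

lemma at_top_if_increments_ge:
  fixes s u :: "nat \<Rightarrow> real"
  assumes inc: "\<And>j. N \<le> j \<Longrightarrow> u j \<le> s (Suc j) - s j"
    and u: "filterlim (\<lambda>n. \<Sum>i<n. u i) at_top sequentially"
  shows "filterlim s at_top sequentially"
proof -
  define c where "c = s N - (\<Sum>i<N. u i)"
  have "c + (\<Sum>i<n. u i) \<le> s n" if "N \<le> n" for n
    using that
  proof (induction n rule: dec_induct)
    case base
    then show ?case by (simp add: c_def)
  next
    case (step n)
    then show ?case using inc[of n] by simp
  qed
  then have "eventually (\<lambda>n. c + (\<Sum>i<n. u i) \<le> s n) sequentially"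
    unfolding eventually_sequentially by blast
  moreover have "filterlim (\<lambda>n. c + (\<Sum>i<n. u i)) at_top sequentially"
    using tendsto_const u by (rule filterlim_tendsto_add_at_top)
  ultimately show ?thesis by (rule filterlim_at_top_mono[rotated])
qed

lemma at_bot_if_increments_le:
  fixes s u :: "nat \<Rightarrow> real"
  assumes "\<And>j. N \<le> j \<Longrightarrow> s (Suc j) - s j \<le> u j"
    and "filterlim (\<lambda>n. \<Sum>i<n. u i) at_bot sequentially"
  shows "filterlim s at_bot sequentially"
proof -
  have "filterlim (\<lambda>n. - s n) at_top sequentially"
  proof (rule at_top_if_increments_ge[of N "\<lambda>i. - u i"])
    show "- u j \<le> - s (Suc j) - - s j" if "N \<le> j" for j
      using assms(1)[OF that] by simp
    show "filterlim (\<lambda>n. \<Sum>i<n. - u i) at_top sequentially"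
      using assms(2) by (simp add: sum_negf filterlim_uminus_at_bot)
  qed
  then show ?thesis by (simp add: filterlim_uminus_at_bot)
qed

lemma exists_change_point:
  fixes P :: "nat \<Rightarrow> bool"
  assumes "P m" "\<not> P n" "m \<le> n"
  shows "\<exists>k\<ge>m. P k \<and> \<not> P (Suc k)"
  using assms(3,2)
proof (induction n rule: dec_induct)
  case base
  then show ?case using assms(1) by simp
next
  case (step n)
  then show ?case by (cases "P n") auto
qed

primrec greedy_sum :: "(nat \<Rightarrow> real) \<Rightarrow> nat set \<Rightarrow> real \<Rightarrow> nat \<Rightarrow> real" where
  "greedy_sum r Z L 0 = 0"
| "greedy_sum r Z L (Suc n) = greedy_sum r Z L n +
     (if n \<notin> Z \<and> (greedy_sum r Z L n < L \<longleftrightarrow> 0 < r n) then r n else 0)"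

definition greedy_set :: "(nat \<Rightarrow> real) \<Rightarrow> nat set \<Rightarrow> real \<Rightarrow> nat set" where
  "greedy_set r Z L = {n. n \<notin> Z \<and> (greedy_sum r Z L n < L \<longleftrightarrow> 0 < r n)}"

lemma greedy_sum_eq: "greedy_sum r Z L n = (\<Sum>i<n. masked (greedy_set r Z L) r i)"
  by (induction n) (simp_all add: masked_def greedy_set_def)

lemma greedy_set_disjoint: "greedy_set r Z L \<inter> Z = {}"
  by (auto simp: greedy_set_def)

lemma greedy_sum_crossing_step:
  assumes "greedy_sum r Z L k < L" "L \<le> greedy_sum r Z L (Suc k)"
  shows "k \<in> greedy_set r Z L" "greedy_sum r Z L (Suc k) = greedy_sum r Z L k + r k"
  using assms by (auto simp: greedy_set_def split: if_splits)

context
  fixes r :: "nat \<Rightarrow> real" and Z :: "nat set" and L :: real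
  assumes r_zero: "r \<longlonglongrightarrow> 0"
    and pos_diverge: "filterlim (\<lambda>n. \<Sum>i<n. max 0 (r i)) at_top sequentially"
    and neg_diverge: "filterlim (\<lambda>n. \<Sum>i<n. min 0 (r i)) at_bot sequentially"
    and Z_summable: "summable (masked Z (\<lambda>i. \<bar>r i\<bar>))"
begin

lemma greedy_sum_frequently_ge: "\<exists>n\<ge>N. L \<le> greedy_sum r Z L n"
proof (rule ccontr)
  let ?s = "greedy_sum r Z L" and ?w = "masked Z (\<lambda>i. \<bar>r i\<bar>)"
  assume "\<not> ?thesis"
  then have below: "\<And>n. N \<le> n \<Longrightarrow> ?s n < L" by auto
  have "max 0 (r j) - ?w j \<le> ?s (Suc j) - ?s j" if "N \<le> j" for j
    using below[OF that] by (auto simp: masked_def)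
  moreover have "filterlim (\<lambda>n. \<Sum>i<n. max 0 (r i) - ?w i) at_top sequentially"
  proof -
    have "(\<lambda>n. - (\<Sum>i<n. ?w i)) \<longlonglongrightarrow> - suminf ?w"
      using Z_summable by (intro tendsto_minus summable_LIMSEQ)
    from filterlim_tendsto_add_at_top[OF this pos_diverge] show ?thesis
      by (simp add: sum_subtractf)
  qed
  ultimately have "filterlim ?s at_top sequentially"
    by (rule at_top_if_increments_ge)
  then obtain n where "N \<le> n" "L \<le> ?s n"
    unfolding filterlim_at_top eventually_sequentially by (meson nle_le)
  then show False using below by fastforce
qed

lemma greedy_sum_frequently_less: "\<exists>n\<ge>N. greedy_sum r Z L n < L"
proof (rule ccontr)
  let ?s = "greedy_sum r Z L" and ?w = "masked Z (\<lambda>i. \<bar>r i\<bar>)"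
  assume "\<not> ?thesis"
  then have above: "\<And>n. N \<le> n \<Longrightarrow> L \<le> ?s n" by auto
  have "?s (Suc j) - ?s j \<le> min 0 (r j) + ?w j" if "N \<le> j" for j
    using above[OF that] by (auto simp: masked_def)
  moreover have "filterlim (\<lambda>n. \<Sum>i<n. min 0 (r i) + ?w i) at_bot sequentially"
  proof -
    have "(\<lambda>n. \<Sum>i<n. ?w i) \<longlonglongrightarrow> suminf ?w"
      using Z_summable by (rule summable_LIMSEQ)
    from filterlim_tendsto_add_at_bot_iff[OF this] neg_diverge show ?thesis
      by (simp add: sum.distrib add.commute)
  qed
  ultimately have "filterlim ?s at_bot sequentially"
    by (rule at_bot_if_increments_le)
  then obtain n where "N \<le> n" "?s n \<le> L - 1"
    unfolding filterlim_at_bot eventually_sequentially by (meson nle_le)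
  then show False using above by fastforce
qed

lemma greedy_sum_crosses: "\<exists>k\<ge>N. greedy_sum r Z L k < L \<and> L \<le> greedy_sum r Z L (Suc k)"
proof -
  obtain m where m: "N \<le> m" "greedy_sum r Z L m < L"
    using greedy_sum_frequently_less by blast
  obtain n where n: "m \<le> n" "L \<le> greedy_sum r Z L n"
    using greedy_sum_frequently_ge by blast
  obtain k where "m \<le> k" "greedy_sum r Z L k < L" "\<not> greedy_sum r Z L (Suc k) < L"
    using exists_change_point[of "\<lambda>k. greedy_sum r Z L k < L" m n] m n by auto
  then show ?thesis
    using m(1) by (intro exI[of _ k]) auto
qed

lemma greedy_set_infinite: "infinite (greedy_set r Z L)"
  unfolding infinite_nat_iff_unbounded_le
  using greedy_sum_crosses greedy_sum_crossing_step(1) by blast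

lemma greedy_sum_tendsto: "greedy_sum r Z L \<longlonglongrightarrow> L"
proof (rule LIMSEQ_I)
  let ?s = "greedy_sum r Z L"
  fix e :: real
  assume "0 < e"
  then obtain N where small: "\<And>n. N \<le> n \<Longrightarrow> \<bar>r n\<bar> < e"
    using r_zero unfolding LIMSEQ_iff by auto
  obtain k where k: "N \<le> k" "?s k < L" "L \<le> ?s (Suc k)"
    using greedy_sum_crosses by blast
  have "\<bar>?s n - L\<bar> < e" if "Suc k \<le> n" for n
    using that
  proof (induction n rule: dec_induct)
    case base
    show ?case
      using k(2,3) greedy_sum_crossing_step(2)[OF k(2,3)] small[OF k(1)] by (simp add: abs_less_iff)
  next
    case (step n)
    then show ?case
      using small[of n] k(1) by (auto simp: abs_less_iff)
  qed
  then show "\<exists>n0. \<forall>n\<ge>n0. norm (?s n - L) < e" by auto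
qed

lemma greedy_subseries_sums: "masked (greedy_set r Z L) r sums L"
proof -
  have "greedy_sum r Z L = (\<lambda>n. \<Sum>i<n. masked (greedy_set r Z L) r i)"
    using greedy_sum_eq by blast
  then show ?thesis
    unfolding sums_def using greedy_sum_tendsto by simp
qed

end

lemma S_cc_subseries_sums:
  assumes "a \<in> S_cc"
  shows "\<exists>X\<in>infcoinf. subsums a X L"
proof -
  let ?r = "\<lambda>i. real_of_rat (a i)"
  have r: "?r \<longlonglongrightarrow> 0" "filterlim (\<lambda>n. \<Sum>i<n. max 0 (?r i)) at_top sequentially"
    "filterlim (\<lambda>n. \<Sum>i<n. min 0 (?r i)) at_bot sequentially"
    using assms unfolding S_cc_def by auto
  obtain Z where Z: "infinite Z" "summable (masked Z (\<lambda>i. \<bar>?r i\<bar>))"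
    using exists_sparse_abs_summable_set[OF r(1)] by blast
  let ?X = "greedy_set ?r Z L"
  have "infinite ?X"
    by (rule greedy_set_infinite[OF r Z(2)])
  moreover have "Z \<subseteq> UNIV - ?X"
    using greedy_set_disjoint[of ?r Z L] by blast
  then have "infinite (UNIV - ?X)"
    using Z(1) by (rule infinite_super)
  moreover have "subsums a ?X L"
    using subsums_iff_masked[OF \<open>infinite ?X\<close>] greedy_subseries_sums[OF r Z(2)] by simp
  ultimately show ?thesis unfolding infcoinf_def by blast
qed

lemma times_lesspoll_infinite_dominant:
  assumes "B \<lesssim> A" "A \<prec> C" "infinite C"
  shows "A \<times> B \<prec> C"
proof -
  have AB: "A \<times> B \<lesssim> A \<times> A"
    using lepoll_refl assms(1) by (rule times_lepoll_mono)
  show ?thesis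
  proof (cases "finite A")
    case True
    then have "finite (A \<times> B)"
      using AB by (meson finite_SigmaI inj_on_finite lepoll_def)
    then show ?thesis by (rule finite_lesspoll_infinite[OF assms(3)])
  next
    case False
    then have "A \<times> A \<lesssim> A"
      unfolding lepoll_def card_of_ordLeq by (rule ordIso_imp_ordLeq[OF card_of_Times_same_infinite])
    then show ?thesis
      using AB assms(2) by (meson lepoll_trans lesspoll_trans1)
  qed
qed

lemma times_lesspoll_infinite:
  assumes "A \<prec> C" "B \<prec> C" "infinite C"
  shows "A \<times> B \<prec> C"
proof -
  have "B \<lesssim> A \<or> A \<lesssim> B"
    unfolding lepoll_def card_of_ordLeq by (rule ordLeq_total[OF card_of_Well_order card_of_Well_order])
  then show ?thesis
  proof
    assume "B \<lesssim> A"
    then show ?thesis using assms(1,3) by (rule times_lesspoll_infinite_dominant)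
  next
    assume "A \<lesssim> B"
    then have "B \<times> A \<prec> C" using assms(2,3) by (rule times_lesspoll_infinite_dominant)
    with times_commute_eqpoll show ?thesis by (rule eq_lesspoll_trans)
  qed
qed

lemma nat_set_family_lepoll_real: "(F :: nat set set) \<lesssim> (UNIV :: real set)"
  using subset_imp_lepoll[of F UNIV] nat_sets_eqpoll_reals by (rule lepoll_trans2) simp

definition ternary :: "nat set \<Rightarrow> real" where
  "ternary K = suminf (masked K (\<lambda>k. (1/3) ^ k))"

lemma summable_ternary_digits: "summable (masked K (\<lambda>k. (1/3::real) ^ k))"
  by (rule summable_masked) simp

lemma ternary_less:
  assumes "m \<in> K" "m \<notin> K'" and agree: "\<And>k. k < m \<Longrightarrow> k \<in> K \<longleftrightarrow> k \<in> K'"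
  shows "ternary K' < ternary K"
proof -
  let ?t = "\<lambda>K. masked K (\<lambda>k. (1/3::real) ^ k)"
  have split: "ternary K = (\<Sum>n. ?t K (n + Suc m)) + (\<Sum>k<Suc m. ?t K k)" for K
    unfolding ternary_def by (rule suminf_split_initial_segment[OF summable_ternary_digits])
  have head: "(\<Sum>k<Suc m. ?t K' k) + (1/3) ^ m = (\<Sum>k<Suc m. ?t K k)"
  proof -
    have "(\<Sum>k<m. ?t K' k) = (\<Sum>k<m. ?t K k)"
      using agree by (intro sum.cong) (auto simp: masked_def)
    then show ?thesis
      using assms(1,2) by (simp add: masked_def)
  qed
  have "(\<lambda>n. (1/3::real) ^ Suc m * (1/3) ^ n) sums ((1/3) ^ Suc m * (1 / (1 - 1/3)))"
    by (intro sums_mult geometric_sums) simp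
  then have geo: "(\<lambda>n. (1/3::real) ^ (n + Suc m)) sums ((1/3) ^ m / 2)"
    by (simp add: power_add mult.commute)
  have "(\<Sum>n. ?t K' (n + Suc m)) \<le> (\<Sum>n. (1/3::real) ^ (n + Suc m))"
    by (intro suminf_le summable_ignore_initial_segment summable_ternary_digits sums_summable[OF geo])
      (simp add: masked_def)
  also have "\<dots> = (1/3) ^ m / 2"
    using geo by (rule sums_unique[symmetric])
  finally have tail': "(\<Sum>n. ?t K' (n + Suc m)) \<le> (1/3) ^ m / 2" .
  have tail: "0 \<le> (\<Sum>n. ?t K (n + Suc m))"
    by (intro suminf_nonneg summable_ignore_initial_segment summable_ternary_digits)
      (simp add: masked_def)
  have "(0::real) < (1/3) ^ m" by simp
  then show ?thesis
    using split[of K] split[of K'] head tail tail' by linarith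
qed

lemma inj_ternary: "inj ternary"
proof (rule injI, rule ccontr)
  fix K K' assume eq: "ternary K = ternary K'" and "K \<noteq> K'"
  then have ex: "\<exists>j. j \<in> K \<longleftrightarrow> j \<notin> K'" by blast
  define m where "m = (LEAST j. j \<in> K \<longleftrightarrow> j \<notin> K')"
  have m: "m \<in> K \<longleftrightarrow> m \<notin> K'"
    unfolding m_def by (rule LeastI_ex[OF ex])
  have agree: "\<And>k. k < m \<Longrightarrow> k \<in> K \<longleftrightarrow> k \<in> K'"
    using not_less_Least unfolding m_def by blast
  show False
    using ternary_less[of m K K'] ternary_less[of m K' K] agree m eq by (cases "m \<in> K") auto
qed

definition code_scale :: "real \<Rightarrow> real" where
  "code_scale x = 3/2 + arctan x / pi"

lemma code_scale_bounds: "1 < code_scale x" "code_scale x < 2"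
  using arctan_bounded[of x] by (simp_all add: code_scale_def field_simps)

lemma inj_code_scale: "inj code_scale"
  by (rule injI) (simp add: code_scale_def arctan_eq_iff)

definition code_index :: "real \<Rightarrow> nat \<Rightarrow> nat" where
  "code_index x i = nat \<lfloor>2 ^ i * code_scale x\<rfloor>"

lemma code_index_bounds: "2 ^ i \<le> code_index x i" "code_index x i < 2 ^ Suc i"
proof -
  have "(2::real) ^ i \<le> 2 ^ i * code_scale x" "2 ^ i * code_scale x < 2 ^ Suc i"
    using code_scale_bounds[of x] by simp_all
  then have lo: "(2::int) ^ i \<le> \<lfloor>2 ^ i * code_scale x\<rfloor>"
    and hi: "\<lfloor>2 ^ i * code_scale x\<rfloor> < (2::int) ^ Suc i"
    by (simp_all only: le_floor_iff floor_less_iff of_int_power of_int_numeral)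
  have "0 \<le> \<lfloor>(2::real) ^ i * code_scale x\<rfloor>"
    using lo by (meson order_trans zero_le_numeral zero_le_power)
  then show "2 ^ i \<le> code_index x i" "code_index x i < 2 ^ Suc i"
    unfolding code_index_def using lo hi by (simp_all add: le_nat_iff nat_less_iff)
qed

lemma code_index_less:
  assumes "i < j"
  shows "code_index x i < code_index y j"
proof -
  have "code_index x i < 2 ^ Suc i" by (rule code_index_bounds)
  also have "\<dots> \<le> 2 ^ j" using assms by (intro power_increasing) auto
  also have "\<dots> \<le> code_index y j" by (rule code_index_bounds)
  finally show ?thesis .
qed

lemma code_index_eq_imp_eq: "code_index x i = code_index y j \<Longrightarrow> i = j"
  using code_index_less[of i j x y] code_index_less[of j i y x] by (metis nat_neq_iff)

lemma code_index_eq_imp_close: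
  assumes "code_index x i = code_index y i"
  shows "\<bar>code_scale x - code_scale y\<bar> < (1/2) ^ i"
proof -
  have "\<lfloor>(2::real) ^ i * code_scale x\<rfloor> = \<lfloor>2 ^ i * code_scale y\<rfloor>"
    using assms code_scale_bounds[of x] code_scale_bounds[of y]
    unfolding code_index_def by (simp add: nat_eq_iff2)
  then have "\<bar>2 ^ i * code_scale x - 2 ^ i * code_scale y\<bar> < (1::real)"
    by linarith
  then have "(2::real) ^ i * \<bar>code_scale x - code_scale y\<bar> < 1"
    by (simp add: abs_mult right_diff_distrib[symmetric])
  then show ?thesis
    by (simp add: field_simps power_divide)
qed

definition code :: "real \<Rightarrow> nat \<Rightarrow> rat" where
  "code x i = (1/3) ^ code_index x i"

lemma masked_code_sums: "masked Y (\<lambda>i. real_of_rat (code x i)) sums ternary (code_index x ` Y)"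
proof -
  have mono: "strict_mono (code_index x)"
    by (rule strict_monoI) (rule code_index_less)
  let ?t = "masked (code_index x ` Y) (\<lambda>k. (1/3::real) ^ k)"
  have "?t sums ternary (code_index x ` Y)"
    unfolding ternary_def by (rule summable_sums[OF summable_ternary_digits])
  then have "(\<lambda>i. ?t (code_index x i)) sums ternary (code_index x ` Y)"
    by (subst sums_mono_reindex[OF mono]) (auto simp: masked_def)
  moreover have "(\<lambda>i. ?t (code_index x i)) = masked Y (\<lambda>i. real_of_rat (code x i))"
    using strict_mono_imp_inj_on[OF mono]
    by (auto simp: masked_def code_def of_rat_power of_rat_divide inj_image_mem_iff)
  ultimately show ?thesis by simp
qed

lemma code_determines:
  assumes "infinite Y" and eq: "ternary (code_index x ` Y) = ternary (code_index y ` Y)"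
  shows "x = y"
proof -
  have images: "code_index x ` Y = code_index y ` Y"
    using inj_ternary eq by (rule injD)
  have close: "\<bar>code_scale x - code_scale y\<bar> < (1/2) ^ i" if "i \<in> Y" for i
  proof -
    have "code_index x i \<in> code_index y ` Y"
      using that images[symmetric] by simp
    then obtain j where "code_index x i = code_index y j"
      by blast
    moreover from this have "i = j"
      by (rule code_index_eq_imp_eq)
    ultimately show ?thesis
      using code_index_eq_imp_close by simp
  qed
  have "code_scale x = code_scale y"
  proof (rule ccontr)
    assume "code_scale x \<noteq> code_scale y"
    then have "0 < \<bar>code_scale x - code_scale y\<bar>" by simp
    then have "\<exists>n. (1/2::real) ^ n < \<bar>code_scale x - code_scale y\<bar>"
      by (rule real_arch_pow_inv) simp
    then obtain n where n: "(1/2::real) ^ n < \<bar>code_scale x - code_scale y\<bar>" ..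
    obtain i where "n \<le> i" "i \<in> Y"
      using assms(1) unfolding infinite_nat_iff_unbounded_le by blast
    have "\<bar>code_scale x - code_scale y\<bar> < (1/2) ^ i"
      using close[OF \<open>i \<in> Y\<close>] .
    also have "\<dots> \<le> (1/2) ^ n"
      using \<open>n \<le> i\<close> by (rule power_decreasing) simp_all
    finally show False
      using n by simp
  qed
  with inj_code_scale show ?thesis by (rule injD)
qed

definition coded_series :: "real \<Rightarrow> nat \<Rightarrow> rat" where
  "coded_series x i = alt_harmonic i + code x i"

lemma coded_series_in_S_cc: "coded_series x \<in> S_cc"
proof -
  have "summable (\<lambda>i. real_of_rat (code x i))"
    using masked_code_sums[of UNIV x] by (simp add: sums_summable)
  moreover have "\<bar>real_of_rat (code x i)\<bar> = real_of_rat (code x i)" for i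
    by (simp add: code_def)
  ultimately have "summable (\<lambda>i. \<bar>real_of_rat (code x i)\<bar>)"
    by simp
  with alt_harmonic_in_S_cc show ?thesis
    unfolding coded_series_def[abs_def] by (rule S_cc_add_abs_summable)
qed

lemma masked_coded_series_sums_iff:
  "masked X (\<lambda>i. real_of_rat (coded_series x i)) sums L \<longleftrightarrow>
     masked X (\<lambda>i. real_of_rat (alt_harmonic i)) sums (L - ternary (code_index x ` X))"
  unfolding coded_series_def of_rat_add masked_add by (rule sums_add_iff[OF masked_code_sums])

lemma good_e_lepoll:
  assumes good: "good_e F"
  shows "(UNIV :: real set) \<lesssim> F"
proof -
  let ?h = "\<lambda>i. real_of_rat (alt_harmonic i)"
  have "\<forall>x. \<exists>Y\<in>F. subsums (coded_series x) Y (\<Sum>i. real_of_rat (coded_series x i))"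
    using good coded_series_in_S_cc unfolding good_e_def by blast
  then obtain X where X: "\<And>x. X x \<in> F"
    "\<And>x. subsums (coded_series x) (X x) (\<Sum>i. real_of_rat (coded_series x i))"
    by metis
  have X_infcoinf: "infinite (X x)" "infinite (UNIV - X x)" for x
    using X(1) good unfolding good_e_def infcoinf_def by blast+
  have rest: "ternary (code_index x ` (UNIV - X x)) = - suminf (masked (UNIV - X x) ?h)" for x
  proof -
    let ?c = "\<lambda>i. real_of_rat (coded_series x i)"
    have "?c sums suminf ?c"
      using coded_series_in_S_cc by (simp add: S_cc_iff summable_sums)
    moreover have "masked (X x) ?c sums suminf ?c"
      using X(2) subsums_iff_masked[OF X_infcoinf(1)] by simp
    ultimately have "masked (UNIV - X x) ?c sums 0"
      using masked_Compl_sums by fastforce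
    then show ?thesis
      unfolding masked_coded_series_sums_iff by (simp add: sums_iff)
  qed
  have "inj X"
  proof (rule injI)
    fix x y
    assume "X x = X y"
    then have "ternary (code_index x ` (UNIV - X x)) = ternary (code_index y ` (UNIV - X x))"
      using rest[of x] rest[of y] by simp
    with X_infcoinf(2) show "x = y" by (rule code_determines)
  qed
  then show ?thesis
    unfolding lepoll_def using X(1) by blast
qed

lemma good_l_lepoll:
  assumes good: "good_l A F" and small: "A \<prec> (UNIV :: real set)"
  shows "(UNIV :: real set) \<lesssim> F"
proof (rule ccontr)
  assume not_le: "\<not> (UNIV :: real set) \<lesssim> F"
  let ?h = "\<lambda>i. real_of_rat (alt_harmonic i)"
  have "\<forall>x. \<exists>p\<in>F \<times> A. subsums (coded_series x) (fst p) (snd p)"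
    using good coded_series_in_S_cc unfolding good_l_def by fastforce
  then obtain f where f: "\<And>x. f x \<in> F \<times> A" "\<And>x. subsums (coded_series x) (fst (f x)) (snd (f x))"
    by metis
  have X_infinite: "infinite (fst (f x))" for x
    using f(1)[of x] good unfolding good_l_def infcoinf_def by auto
  have code_f: "ternary (code_index x ` fst (f x)) = snd (f x) - suminf (masked (fst (f x)) ?h)" for x
    using f(2)[of x] unfolding subsums_iff_masked[OF X_infinite] masked_coded_series_sums_iff
    by (simp add: sums_iff)
  have "inj f"
  proof (rule injI)
    fix x y
    assume "f x = f y"
    then have "ternary (code_index x ` fst (f x)) = ternary (code_index y ` fst (f x))"
      using code_f[of x] code_f[of y] by simp
    with X_infinite show "x = y" by (rule code_determines)
  qed
  then have "(UNIV :: real set) \<lesssim> F \<times> A"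
    unfolding lepoll_def using f(1) by blast
  moreover have "F \<prec> (UNIV :: real set)"
    using nat_set_family_lepoll_real not_le eqpoll_imp_lepoll eqpoll_sym
    unfolding lesspoll_def by blast
  then have "F \<times> A \<prec> (UNIV :: real set)"
    using small infinite_UNIV_char_0 by (rule times_lesspoll_infinite)
  ultimately show False
    using lesspoll_trans1 by blast
qed

lemma good_e_infcoinf: "good_e infcoinf"
  unfolding good_e_def using S_cc_subseries_sums by blast

lemma good_l_infcoinf: "A \<noteq> {} \<Longrightarrow> good_l A infcoinf"
  unfolding good_l_def using S_cc_subseries_sums by blast

lemma infcoinf_eqpoll_real: "infcoinf \<approx> (UNIV :: real set)"
  using nat_set_family_lepoll_real good_e_lepoll[OF good_e_infcoinf] by (rule lepoll_antisym)

lemma least_card_is_c_good_e: "least_card_is_c good_e"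
  unfolding least_card_is_c_def
  using good_e_infcoinf infcoinf_eqpoll_real good_e_lepoll by blast

lemma least_card_is_c_good_l:
  "A \<noteq> {} \<Longrightarrow> A \<prec> (UNIV :: real set) \<Longrightarrow> least_card_is_c (good_l A)"
  unfolding least_card_is_c_def
  using good_l_infcoinf infcoinf_eqpoll_real good_l_lepoll by blast

definition dyadic_split :: "rat \<Rightarrow> nat \<Rightarrow> rat" where
  "dyadic_split d i = d / 2 ^ Suc i"

lemma dyadic_split_sums: "(\<lambda>i. real_of_rat (dyadic_split d i)) sums real_of_rat d"
proof -
  have "(\<lambda>i. real_of_rat (dyadic_split d i)) = (\<lambda>i. real_of_rat d * (1/2) ^ Suc i)"
    by (simp add: dyadic_split_def of_rat_divide of_rat_power of_rat_mult power_divide)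
  then show ?thesis
    using sums_mult[OF power_half_series, of "real_of_rat d"] by simp
qed

lemma masked_sums_pos:
  fixes f :: "nat \<Rightarrow> real"
  assumes "\<And>i. 0 \<le> f i" "masked X f sums L" "i \<in> X" "0 < f i"
  shows "0 < L"
  using suminf_pos2[OF sums_summable[OF assms(2)], of i] assms by (auto simp: masked_def sums_iff)

lemma masked_sums_strict_bounds:
  fixes f :: "nat \<Rightarrow> real"
  assumes pos: "\<And>i. 0 < f i" and "f sums S" "masked X f sums L" "i \<in> X" "j \<notin> X"
  shows "0 < L" "L < S"
proof -
  show "0 < L"
    using masked_sums_pos[OF _ assms(3,4)] pos less_imp_le by blast
  have "0 < S - L"
    using masked_sums_pos[OF _ masked_Compl_sums[OF assms(2,3)]] pos less_imp_le assms(5) by blast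
  then show "L < S" by simp
qed

abbreviation perturbed_alt_harmonic :: "rat \<Rightarrow> nat \<Rightarrow> rat" where
  "perturbed_alt_harmonic d \<equiv> \<lambda>i. alt_harmonic i + dyadic_split d i"

lemma perturbed_alt_harmonic_in_S_cc:
  assumes "0 < d"
  shows "perturbed_alt_harmonic d \<in> S_cc"
proof (rule S_cc_add_abs_summable[OF alt_harmonic_in_S_cc])
  show "summable (\<lambda>i. \<bar>real_of_rat (dyadic_split d i)\<bar>)"
    using sums_summable[OF dyadic_split_sums] assms by (simp add: dyadic_split_def)
qed

lemma perturbed_alt_harmonic_ne:
  assumes "0 < d"
  shows "perturbed_alt_harmonic d \<noteq> alt_harmonic"
proof
  assume "perturbed_alt_harmonic d = alt_harmonic"
  then have "alt_harmonic 0 + dyadic_split d 0 = alt_harmonic 0"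
    using fun_cong[of _ _ 0] by metis
  then show False
    using assms by (simp add: dyadic_split_def)
qed

lemma perturbed_alt_harmonic_subsums_gap:
  assumes "X \<in> infcoinf" "0 < d"
    and "subsums alt_harmonic X L1" "subsums (perturbed_alt_harmonic d) X L2"
  shows "0 < L2 - L1" "L2 - L1 < real_of_rat d"
proof -
  let ?h = "\<lambda>i. real_of_rat (alt_harmonic i)" and ?c = "\<lambda>i. real_of_rat (dyadic_split d i)"
  have X: "infinite X" "infinite (UNIV - X)"
    using assms(1) unfolding infcoinf_def by auto
  obtain i j where "i \<in> X" "j \<notin> X"
    using infinite_imp_nonempty[OF X(1)] infinite_imp_nonempty[OF X(2)] by blast
  have "(\<lambda>i. masked X (\<lambda>i. ?h i + ?c i) i - masked X ?h i) sums (L2 - L1)"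
    using assms(3,4) unfolding subsums_iff_masked[OF X(1)] of_rat_add by (rule sums_diff[rotated])
  then have "masked X ?c sums (L2 - L1)"
    by (simp add: masked_add)
  moreover have "0 < ?c k" for k
    using assms(2) by (simp add: dyadic_split_def)
  ultimately show "0 < L2 - L1" "L2 - L1 < real_of_rat d"
    using masked_sums_strict_bounds[OF _ dyadic_split_sums _ \<open>i \<in> X\<close> \<open>j \<notin> X\<close>] by blast+
qed

lemma exists_rat_below_gaps:
  fixes B :: "real set"
  assumes "finite B"
  shows "\<exists>d. 0 < d \<and> (\<forall>p\<in>B. \<forall>q\<in>B. q < p \<longrightarrow> real_of_rat d < p - q)"
proof -
  \<comment> \<open>the element 1 keeps D nonempty when B has no positive gaps\<close>
  define D where "D = insert 1 ((\<lambda>(p, q). p - q) ` {(p, q) \<in> B \<times> B. q < p})"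
  have "finite {(p, q) \<in> B \<times> B. q < p}"
    by (rule finite_subset[of _ "B \<times> B"]) (use assms in auto)
  then have D: "finite D"
    unfolding D_def by simp
  then have "0 < Min D"
    unfolding D_def by auto
  then obtain d where d: "0 < real_of_rat d" "real_of_rat d < Min D"
    using of_rat_dense by blast
  have gap: "Min D \<le> p - q" if "p \<in> B" "q \<in> B" "q < p" for p q
    using D by (rule Min_le) (use that in \<open>auto simp: D_def intro!: rev_image_eqI[of "(p, q)"]\<close>)
  show ?thesis
  proof (intro exI[of _ d] conjI ballI impI)
    show "0 < d" using d(1) by simp
    show "real_of_rat d < p - q" if "p \<in> B" "q \<in> B" "q < p" for p q
      using d(2) gap[OF that] by linarith
  qed
qed

lemma common_subseries_if_card_less_2:
  assumes "F \<subseteq> S_cc" "finite F" "card F < 2"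
    and good: "\<And>a. a \<in> S_cc \<Longrightarrow> \<exists>X\<in>infcoinf. P a X"
  shows "\<exists>X\<in>infcoinf. \<forall>a\<in>F. P a X"
proof -
  obtain a0 where "a0 \<in> S_cc" "F \<subseteq> {a0}"
  proof (cases "F = {}")
    case True
    then show thesis using that alt_harmonic_in_S_cc by blast
  next
    case False
    then obtain a0 where "a0 \<in> F" by blast
    then show thesis
      using that assms(1,3) card_le_Suc0_iff_eq[OF assms(2)] by auto
  qed
  then show ?thesis
    using good by blast
qed

lemma least_card_is_2_good_e_perp: "least_card_is_2 good_e_perp"
proof -
  let ?F = "{alt_harmonic, perturbed_alt_harmonic 1}"
  have sum_perturbed:
    "(\<Sum>i. real_of_rat (perturbed_alt_harmonic 1 i)) = (\<Sum>i. real_of_rat (alt_harmonic i)) + 1"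
    using sums_add[OF summable_sums[OF summable_alt_harmonic] dyadic_split_sums[of 1]]
    by (simp add: of_rat_add sums_iff)
  have "good_e_perp ?F"
    unfolding good_e_perp_def
  proof (intro conjI notI)
    show "?F \<subseteq> S_cc"
      using alt_harmonic_in_S_cc perturbed_alt_harmonic_in_S_cc[of 1] by simp
  next
    assume "\<exists>X\<in>infcoinf. \<forall>a\<in>?F. subsums a X (\<Sum>i. real_of_rat (a i))"
    then obtain X where "X \<in> infcoinf" "subsums alt_harmonic X (\<Sum>i. real_of_rat (alt_harmonic i))"
      "subsums (perturbed_alt_harmonic 1) X (\<Sum>i. real_of_rat (perturbed_alt_harmonic 1 i))"
      by auto
    from perturbed_alt_harmonic_subsums_gap(2)[OF this(1) zero_less_one this(2,3)]
    show False
      using sum_perturbed by simp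
  qed
  moreover have "card ?F = 2"
    using perturbed_alt_harmonic_ne[of 1] by auto
  moreover have "infinite F \<or> 2 \<le> card F" if "good_e_perp F" for F
  proof (rule ccontr)
    assume "\<not> ?thesis"
    then have "\<exists>X\<in>infcoinf. \<forall>a\<in>F. subsums a X (\<Sum>i. real_of_rat (a i))"
      using that S_cc_subseries_sums unfolding good_e_perp_def
      by (intro common_subseries_if_card_less_2) auto
    then show False
      using that unfolding good_e_perp_def by blast
  qed
  ultimately show ?thesis
    unfolding least_card_is_2_def by blast
qed

lemma least_card_is_2_good_l_perp:
  assumes "B \<noteq> {}" "finite B"
  shows "least_card_is_2 (good_l_perp B)"
proof -
  obtain d where d: "0 < d" "\<And>p q. p \<in> B \<Longrightarrow> q \<in> B \<Longrightarrow> q < p \<Longrightarrow> real_of_rat d < p - q"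
    using exists_rat_below_gaps[OF assms(2)] by blast
  let ?F = "{alt_harmonic, perturbed_alt_harmonic d}"
  have "good_l_perp B ?F"
    unfolding good_l_perp_def
  proof (intro conjI notI)
    show "?F \<subseteq> S_cc"
      using alt_harmonic_in_S_cc perturbed_alt_harmonic_in_S_cc[OF d(1)] by simp
  next
    assume "\<exists>X\<in>infcoinf. \<forall>a\<in>?F. \<exists>L\<in>B. subsums a X L"
    then obtain X L1 L2 where "X \<in> infcoinf" "L1 \<in> B" "L2 \<in> B"
      "subsums alt_harmonic X L1" "subsums (perturbed_alt_harmonic d) X L2"
      by auto
    moreover from this have "0 < L2 - L1" "L2 - L1 < real_of_rat d"
      using perturbed_alt_harmonic_subsums_gap[OF _ d(1)] by blast+
    ultimately show False
      using d(2)[of L2 L1] by linarith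
  qed
  moreover have "card ?F = 2"
    using perturbed_alt_harmonic_ne[OF d(1)] by auto
  moreover have "infinite F \<or> 2 \<le> card F" if "good_l_perp B F" for F
  proof (rule ccontr)
    assume "\<not> ?thesis"
    moreover have "\<exists>X\<in>infcoinf. \<exists>L\<in>B. subsums a X L" if "a \<in> S_cc" for a
      using assms(1) S_cc_subseries_sums[OF that] by blast
    ultimately have "\<exists>X\<in>infcoinf. \<forall>a\<in>F. \<exists>L\<in>B. subsums a X L"
      using that unfolding good_l_perp_def
      by (intro common_subseries_if_card_less_2) auto
    then show False
      using that unfolding good_l_perp_def by blast
  qed
  ultimately show ?thesis
    unfolding least_card_is_2_def by blast
qed

theorem mainTheorem9:
  shows "least_card_is_c good_e
       \<and> (\<forall>A :: real set. A \<noteq> {} \<and> A \<prec> (UNIV :: real set) \<longrightarrow> least_card_is_c (good_l A))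
       \<and> least_card_is_2 good_e_perp
       \<and> (\<forall>B :: real set. B \<noteq> {} \<and> finite B \<longrightarrow> least_card_is_2 (good_l_perp B))"
  using least_card_is_c_good_e least_card_is_c_good_l least_card_is_2_good_e_perp
    least_card_is_2_good_l_perp
  by blast

end
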